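(* For all $m\geq 2$: $s_{1,m}(122,213)=1$, $s_{2,m}(122,213)=m+1$, and for all $n\geq 3$, \[ s_{n,m}(122,213)=m\,s_{n-1,m}(122,213)+s_{n-2,m}(122,213). \]
   Context: $[n]_m=\{1^m,\ldots,n^m\}$; a permutation of $[n]_m$ is a sequence of length $nm$ in which each element of $[n]$ appears exactly $m$ times. A sequence avoids a pattern $\pi$ if it has no subsequence order-isomorphic to $\pi$ (same relative order and same equalities among entries). $s_{n,m}(\Pi)$ is the number of permutations of $[n]_m$ avoiding all patterns in $\Pi$. *)

theory Defs
  imports Main "HOL-Library.Sublist"
begin

definition order_iso :: "nat list \<Rightarrow> nat list \<Rightarrow> bool" where
  "order_iso s p \<longleftrightarrow> length s = length p \<and>
     (\<forall>i < length s. \<forall>j < length s. (s ! i < s ! j \<longleftrightarrow> p ! i < p ! j))"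

definition contains :: "nat list \<Rightarrow> nat list \<Rightarrow> bool" where
  "contains w p \<longleftrightarrow> (\<exists>s. subseq s w \<and> order_iso s p)"

definition avoids_all :: "nat list \<Rightarrow> nat list set \<Rightarrow> bool" where
  "avoids_all w P \<longleftrightarrow> (\<forall>p\<in>P. \<not> contains w p)"

definition multiperms :: "nat \<Rightarrow> nat \<Rightarrow> nat list set" where
  "multiperms n m = {w. length w = n * m \<and> set w \<subseteq> {1..n} \<and>
                        (\<forall>i\<in>{1..n}. count_list w i = m)}"

definition s_count :: "nat \<Rightarrow> nat \<Rightarrow> nat list set \<Rightarrow> nat" where
  "s_count n m P = card {w \<in> multiperms n m. avoids_all w P}"

end

theory Submission
  imports Defs
begin

text \<open>
  Let \<open>Av n m\<close> be the set of permutations of \<open>[n]\<^sub>m\<close> avoiding 122 and 213.  Consider the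
  largest letter \<open>n\<close> of a word \<open>w \<in> Av n m\<close>.  After the first letter \<open>h < n\<close> at most one
  copy of \<open>n\<close> can follow (else \<open>h n n\<close> is a 122), so \<open>w = n^(m-1) x n y\<close> with \<open>n\<close> not
  in \<open>x\<close>, \<open>y\<close>; a descent in \<open>x\<close> followed by this \<open>n\<close> would be a 213, so \<open>x\<close> is weakly
  increasing, and \<open>x y \<in> Av (n - 1) m\<close>.  Conversely every such word avoids both patterns.
  Hence \<open>w \<mapsto> (x y, |x|)\<close> is a bijection from \<open>Av n m\<close> onto the pairs \<open>(u, k)\<close> with
  \<open>u \<in> Av (n - 1) m\<close> and \<open>take k u\<close> sorted.  Applying the same description to \<open>u\<close>
  itself shows that for \<open>m \<ge> 2\<close> the sorted prefixes of \<open>u\<close> are those of length \<open>< m\<close>, plus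
  the one of length \<open>m\<close> exactly when \<open>u = (n-1)^m v\<close> with \<open>v \<in> Av (n - 2) m\<close>; summing
  yields \<open>|Av n m| = m |Av (n-1) m| + |Av (n-2) m|\<close>.
\<close>

lemma order_iso_triple:
  "order_iso [a,b,c] [p,q,r::nat] \<longleftrightarrow>
     (a < b \<longleftrightarrow> p < q) \<and> (b < a \<longleftrightarrow> q < p) \<and> (a < c \<longleftrightarrow> p < r) \<and>
     (c < a \<longleftrightarrow> r < p) \<and> (b < c \<longleftrightarrow> q < r) \<and> (c < b \<longleftrightarrow> r < q)"
  unfolding order_iso_def by (auto simp: numeral_3_eq_3 All_less_Suc)

lemma contains_length3:
  "contains w [p,q,r] \<longleftrightarrow> (\<exists>a b c. subseq [a,b,c] w \<and> order_iso [a,b,c] [p,q,r])"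
proof
  assume "contains w [p,q,r]"
  then obtain s where s: "subseq s w" "order_iso s [p,q,r]"
    unfolding contains_def by blast
  then have "length s = Suc (Suc (Suc 0))"
    unfolding order_iso_def by simp
  then obtain a b c where "s = [a,b,c]"
    by (auto simp: length_Suc_conv)
  then show "\<exists>a b c. subseq [a,b,c] w \<and> order_iso [a,b,c] [p,q,r]"
    using s by blast
qed (auto simp: contains_def)

definition avoids_122_213 :: "nat list \<Rightarrow> bool" where
  "avoids_122_213 w \<longleftrightarrow>
     (\<forall>a b c. subseq [a,b,c] w \<longrightarrow> \<not> (a < b \<and> b = c) \<and> \<not> (b < a \<and> a < c))"

lemma avoids_all_iff: "avoids_all w {[1,2,2],[2,1,3]} \<longleftrightarrow> avoids_122_213 w"
proof -
  have c122: "contains w [1,2,2] \<longleftrightarrow> (\<exists>a b c. subseq [a,b,c] w \<and> a < b \<and> b = c)"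
    unfolding contains_length3 order_iso_triple by (auto; fastforce)
  have c213: "contains w [2,1,3] \<longleftrightarrow> (\<exists>a b c. subseq [a,b,c] w \<and> b < a \<and> a < c)"
    unfolding contains_length3 order_iso_triple by (auto; blast intro: less_trans dest: less_asym)
  have "avoids_all w {[1,2,2],[2,1,3]} \<longleftrightarrow> \<not> contains w [1,2,2] \<and> \<not> contains w [2,1,3]"
    unfolding avoids_all_def by blast
  then show ?thesis
    unfolding c122 c213 avoids_122_213_def by blast
qed

lemma subseq_set: "subseq xs ys \<Longrightarrow> set xs \<subseteq> set ys"
  by (auto elim: list_emb_set)

lemma avoids_subseq:
  assumes "subseq v w" and "avoids_122_213 w"
  shows "avoids_122_213 v"
  unfolding avoids_122_213_def
proof (intro allI impI)
  fix a b c assume "subseq [a,b,c] v"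
  then have "subseq [a,b,c] w"
    using assms(1) by (rule subseq_order.trans)
  then show "\<not> (a < b \<and> b = c) \<and> \<not> (b < a \<and> a < c)"
    using assms(2) unfolding avoids_122_213_def by blast
qed

lemma subseq_Cons_right:
  "subseq (a # xs) (h # w) \<longleftrightarrow> (a = h \<and> subseq xs w) \<or> subseq (a # xs) w"
  by (auto dest: subseq_Cons')

lemma avoids_Cons:
  "avoids_122_213 (h # w) \<longleftrightarrow> avoids_122_213 w \<and>
     (\<forall>b c. subseq [b,c] w \<longrightarrow> \<not> (h < b \<and> b = c) \<and> \<not> (b < h \<and> h < c))"
  unfolding avoids_122_213_def subseq_Cons_right by blast

text \<open>Copies of a letter that is at least every other letter may be prepended freely:
  a largest first letter can play neither the role of 1 in 122 nor of 2 in 213.\<close>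

lemma avoids_replicate_top:
  assumes "\<forall>v\<in>set t. v \<le> n" and "avoids_122_213 t"
  shows "avoids_122_213 (replicate k n @ t)"
proof (induction k)
  case 0
  then show ?case using assms(2) by simp
next
  case (Suc k)
  have "\<forall>b c. subseq [b,c] (replicate k n @ t) \<longrightarrow> \<not> (n < b \<and> b = c) \<and> \<not> (b < n \<and> n < c)"
    using subseq_set assms(1) by fastforce
  then show ?case
    using Suc.IH by (simp add: avoids_Cons)
qed

lemma subseq_pair_around:
  assumes "subseq [b,c] (x @ n # y)"
  shows "subseq [b,c] (x @ y) \<or> (b \<in> set x \<and> c = n) \<or> (b = n \<and> c \<in> set y)"
proof -
  obtain xs1 xs2 where split: "[b,c] = xs1 @ xs2" "subseq xs1 x" "subseq xs2 (n # y)"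
    using assms by (rule subseq_appendE)
  have "(xs1 = [] \<and> xs2 = [b,c]) \<or> (xs1 = [b] \<and> xs2 = [c]) \<or> (xs1 = [b,c] \<and> xs2 = [])"
    using split(1) by (cases xs1; cases "tl xs1") auto
  then consider "xs1 = []" "xs2 = [b,c]" | "xs1 = [b]" "xs2 = [c]" | "xs1 = [b,c]" "xs2 = []"
    by blast
  then show ?thesis
  proof cases
    case 1
    then have "(b = n \<and> c \<in> set y) \<or> subseq [b,c] y"
      using split(3) by (auto simp: subseq_singleton_left split: if_splits)
    then show ?thesis using subseq_drop_many by blast
  next
    case 2
    then have "b \<in> set x" "c = n \<or> c \<in> set y"
      using split by (auto simp: subseq_singleton_left split: if_splits)
    moreover have "c \<in> set y \<Longrightarrow> subseq ([b] @ [c]) (x @ y)"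
      using \<open>b \<in> set x\<close> by (intro list_emb_append_mono) (auto simp: subseq_singleton_left)
    ultimately show ?thesis by auto
  next
    case 3
    then show ?thesis using split subseq_rev_drop_many by blast
  qed
qed

text \<open>Inserting a new largest letter \<open>n\<close> directly after a weakly increasing prefix \<open>x\<close>
  creates no occurrence: 122 would need two copies of \<open>n\<close>, and 213 would need a descent in \<open>x\<close>.\<close>

lemma avoids_insert_sorted:
  assumes "sorted x" and "\<forall>v\<in>set x \<union> set y. v < n" and "avoids_122_213 (x @ y)"
  shows "avoids_122_213 (x @ n # y)"
  using assms
proof (induction x)
  case Nil
  have "\<forall>b c. subseq [b,c] y \<longrightarrow> \<not> (n < b \<and> b = c) \<and> \<not> (b < n \<and> n < c)"
    using subseq_set Nil.prems(2) by fastforce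
  then show ?case
    using Nil.prems(3) by (simp add: avoids_Cons)
next
  case (Cons a x)
  have IH: "avoids_122_213 (x @ n # y)"
    using Cons by (simp add: avoids_Cons)
  have "\<not> (a < b \<and> b = c) \<and> \<not> (b < a \<and> a < c)" if bc: "subseq [b,c] (x @ n # y)" for b c
    using subseq_pair_around[OF bc]
  proof (elim disjE conjE)
    assume "subseq [b,c] (x @ y)"
    then show ?thesis using Cons.prems(3) by (simp add: avoids_Cons)
  next
    assume "b \<in> set x" "c = n"
    then show ?thesis using Cons.prems(1,2) by auto
  next
    assume "b = n" "c \<in> set y"
    then show ?thesis using Cons.prems(2) by auto
  qed
  then show ?case
    using IH by (simp add: avoids_Cons)
qed

lemma sorted_if_subseq_pairs: "(\<forall>a b. subseq [a,b] x \<longrightarrow> a \<le> b) \<Longrightarrow> sorted (x::nat list)"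
proof (induction x)
  case (Cons a x)
  have "\<forall>a b. subseq [a,b] x \<longrightarrow> a \<le> b"
    using Cons.prems by (meson list_emb.list_emb_Cons)
  moreover have "\<forall>b\<in>set x. a \<le> b"
    using Cons.prems by (simp add: subseq_singleton_left)
  ultimately show ?case
    using Cons.IH by simp
qed simp

text \<open>Conversely, in an avoiding word every letter before an occurrence of a larger letter
  \<open>n\<close> is part of a weakly increasing run: a descent \<open>a > b\<close> followed by \<open>n\<close> is a 213.\<close>

lemma sorted_before_top:
  assumes "avoids_122_213 (x @ n # y)" and "\<forall>v\<in>set x. v < n"
  shows "sorted x"
proof (rule sorted_if_subseq_pairs, intro allI impI)
  fix a b assume ab: "subseq [a,b] x"
  then have "subseq ([a,b] @ [n]) (x @ [n])"
    by (rule list_emb_append_mono) simp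
  then have "subseq [a,b,n] ((x @ [n]) @ y)"
    by (simp only: append_Cons append_Nil) (rule subseq_rev_drop_many)
  moreover have "a < n"
    using subseq_set[OF ab] assms(2) by auto
  ultimately show "a \<le> b"
    using assms(1) unfolding avoids_122_213_def by fastforce
qed

lemma avoids_insert_top_iff:
  assumes "\<forall>v\<in>set x \<union> set y. v < n"
  shows "avoids_122_213 (replicate j n @ x @ n # y) \<longleftrightarrow> sorted x \<and> avoids_122_213 (x @ y)"
proof
  assume av: "avoids_122_213 (replicate j n @ x @ n # y)"
  then have av': "avoids_122_213 (x @ n # y)"
    by (rule avoids_subseq[rotated]) (rule subseq_drop_many, simp)
  have "subseq (x @ y) (x @ n # y)"
    by (simp add: subseq_append' list_emb.list_emb_Cons)
  then have "avoids_122_213 (x @ y)"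
    using av' by (rule avoids_subseq)
  moreover have "sorted x"
    using av' assms by (intro sorted_before_top) auto
  ultimately show "sorted x \<and> avoids_122_213 (x @ y)" by blast
next
  assume "sorted x \<and> avoids_122_213 (x @ y)"
  then have "avoids_122_213 (x @ n # y)"
    using avoids_insert_sorted assms by blast
  moreover have "\<forall>v\<in>set (x @ n # y). v \<le> n"
    using assms by (auto intro: less_imp_le)
  ultimately show "avoids_122_213 (replicate j n @ x @ n # y)"
    using avoids_replicate_top by blast
qed

lemma count_list_replicate: "count_list (replicate k a) x = (if x = a then k else 0)"
  by (induction k) auto

lemma subseq_of_count_two: "2 \<le> count_list xs x \<Longrightarrow> subseq [x,x] xs"
proof (induction xs)
  case (Cons a xs)
  show ?case
  proof (cases "a = x")
    case True
    then have "count_list xs x \<noteq> 0"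
      using Cons.prems by simp
    then have "x \<in> set xs"
      by (simp add: count_list_0_iff)
    then show ?thesis
      using True by (simp add: subseq_singleton_left)
  next
    case False
    then show ?thesis
      using Cons by simp
  qed
qed simp

lemma count_list_one_split:
  assumes "count_list t n = 1"
  obtains x y where "t = x @ n # y" and "n \<notin> set x" and "n \<notin> set y"
proof -
  have "n \<in> set t"
    using assms by (metis count_list_0_iff zero_neq_one)
  then obtain x y where t: "t = x @ n # y" and x: "n \<notin> set x"
    by (meson split_list_first)
  then have "count_list y n = 0"
    using assms by simp
  then have "n \<notin> set y"
    by (simp add: count_list_0_iff)
  with t x show ?thesis
    by (rule that)
qed

lemma count_top_after_smaller:
  assumes "avoids_122_213 (h # t)" and "h < n"
  shows "count_list t n \<le> 1"
proof (rule ccontr)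
  assume "\<not> count_list t n \<le> 1"
  then have "subseq [h,n,n] (h # t)"
    by (simp add: subseq_of_count_two)
  then show False
    using assms unfolding avoids_122_213_def by blast
qed

text \<open>Indeed, after the maximal block of leading \<open>n\<close>'s at most one more \<open>n\<close> can occur.\<close>

lemma avoids_top_split:
  assumes av: "avoids_122_213 w" and le: "\<forall>v\<in>set w. v \<le> n"
    and cnt: "count_list w n = m" and m: "1 \<le> m"
  shows "\<exists>x y. w = replicate (m - 1) n @ x @ n # y \<and> n \<notin> set x \<and> n \<notin> set y"
proof -
  define j where "j = length (takeWhile (\<lambda>v. v = n) w)"
  define t where "t = dropWhile (\<lambda>v. v = n) w"
  have tw: "takeWhile (\<lambda>v. v = n) w = replicate j n"
    unfolding j_def by (rule replicate_length_same[symmetric]) (auto dest: set_takeWhileD)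
  have w: "w = replicate j n @ t"
    using takeWhile_dropWhile_id[of "\<lambda>v. v = n" w] tw unfolding t_def by simp
  have "count_list t n \<le> 1"
  proof (cases t)
    case (Cons h t')
    have "h \<noteq> n"
      using hd_dropWhile[of "\<lambda>v. v = n" w] Cons unfolding t_def by simp
    moreover have "h \<le> n"
      using le unfolding w Cons by simp
    moreover have "subseq (h # t') w"
      unfolding w Cons by (rule subseq_drop_many) (rule subseq_order.order_refl)
    then have "avoids_122_213 (h # t')"
      using av by (rule avoids_subseq)
    ultimately have "count_list t' n \<le> 1"
      by (intro count_top_after_smaller) auto
    then show ?thesis
      using Cons \<open>h \<noteq> n\<close> by simp
  qed simp
  moreover have jt: "j + count_list t n = m"
    using cnt w by (simp add: count_list_replicate)
  ultimately have j: "m - 1 \<le> j"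
    by linarith
  define t' where "t' = replicate (j - (m - 1)) n @ t"
  have "replicate j n = replicate (m - 1) n @ replicate (j - (m - 1)) n"
    using j by (simp flip: replicate_add)
  then have w': "w = replicate (m - 1) n @ t'"
    using w unfolding t'_def by simp
  have "count_list t' n = 1"
    using jt j m unfolding t'_def by (simp add: count_list_replicate)
  then obtain x y where "t' = x @ n # y" "n \<notin> set x" "n \<notin> set y"
    by (rule count_list_one_split)
  then show ?thesis
    using w' by blast
qed

lemma multiperms_letters: "w \<in> multiperms n m \<Longrightarrow> v \<in> set w \<Longrightarrow> 1 \<le> v \<and> v \<le> n"
  unfolding multiperms_def by auto

lemma multiperms_insert_top:
  assumes n: "1 \<le> n" and m: "1 \<le> m" and x: "n \<notin> set x" and y: "n \<notin> set y"
  shows "replicate (m - 1) n @ x @ n # y \<in> multiperms n m \<longleftrightarrow> x @ y \<in> multiperms (n - 1) m"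
proof -
  let ?w = "replicate (m - 1) n @ x @ n # y"
  have top: "{1..n} = insert n {1..n - 1}"
    using n by auto
  have "length ?w = n * m \<longleftrightarrow> length (x @ y) = (n - 1) * m"
    using n m by (cases n) auto
  moreover have "set ?w = insert n (set (x @ y))"
    using m by auto
  then have "set ?w \<subseteq> {1..n} \<longleftrightarrow> set (x @ y) \<subseteq> {1..n - 1}"
    unfolding top using x y by auto
  moreover have "count_list ?w i = (if i = n then m else count_list (x @ y) i)" for i
    using m x y by (simp add: count_list_replicate)
  then have "(\<forall>i\<in>{1..n}. count_list ?w i = m) \<longleftrightarrow> (\<forall>i\<in>{1..n - 1}. count_list (x @ y) i = m)"
    unfolding top by auto
  ultimately show ?thesis
    unfolding multiperms_def by blast
qed

definition Av :: "nat \<Rightarrow> nat \<Rightarrow> nat list set" where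
  "Av n m = {w \<in> multiperms n m. avoids_122_213 w}"

text \<open>The lengths of the weakly increasing prefixes of a word; these are the admissible
  positions for inserting the isolated copy of a new largest letter.\<close>

definition sorted_prefixes :: "nat list \<Rightarrow> nat set" where
  "sorted_prefixes u = {k. k \<le> length u \<and> sorted (take k u)}"

definition insert_top :: "nat \<Rightarrow> nat \<Rightarrow> nat list \<Rightarrow> nat \<Rightarrow> nat list" where
  "insert_top n m u k = replicate (m - 1) n @ take k u @ n # drop k u"

lemma Av_letters_below: "u \<in> Av (n - 1) m \<Longrightarrow> v \<in> set u \<Longrightarrow> v < n"
  unfolding Av_def using multiperms_letters by fastforce

lemma insert_top_in_Av:
  assumes n: "1 \<le> n" and m: "1 \<le> m" and u: "u \<in> Av (n - 1) m" and k: "k \<in> sorted_prefixes u"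
  shows "insert_top n m u k \<in> Av n m"
proof -
  let ?x = "take k u" and ?y = "drop k u"
  have below: "\<forall>v\<in>set ?x \<union> set ?y. v < n"
    using Av_letters_below[OF u] by (auto dest: in_set_takeD in_set_dropD)
  then have "n \<notin> set ?x" "n \<notin> set ?y"
    by auto
  then have "insert_top n m u k \<in> multiperms n m"
    using u multiperms_insert_top[OF n m] unfolding insert_top_def Av_def by simp
  moreover have "avoids_122_213 (insert_top n m u k)"
    using u k avoids_insert_top_iff[OF below]
    unfolding insert_top_def Av_def sorted_prefixes_def by simp
  ultimately show ?thesis
    unfolding Av_def by blast
qed

lemma Av_decompose:
  assumes n: "1 \<le> n" and m: "1 \<le> m" and w: "w \<in> Av n m"
  obtains u k where "u \<in> Av (n - 1) m" and "k \<in> sorted_prefixes u" and "w = insert_top n m u k"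
proof -
  have wm: "w \<in> multiperms n m" and av: "avoids_122_213 w"
    using w unfolding Av_def by auto
  have "count_list w n = m"
    using wm n unfolding multiperms_def by auto
  moreover have "\<forall>v\<in>set w. v \<le> n"
    using multiperms_letters[OF wm] by blast
  ultimately obtain x y where w_eq: "w = replicate (m - 1) n @ x @ n # y"
    and x: "n \<notin> set x" and y: "n \<notin> set y"
    using avoids_top_split[OF av _ _ m] by blast
  have below: "\<forall>v\<in>set x \<union> set y. v < n"
  proof
    fix v assume v: "v \<in> set x \<union> set y"
    then have "v \<le> n"
      using multiperms_letters[OF wm] unfolding w_eq by auto
    moreover have "v \<noteq> n"
      using v x y by auto
    ultimately show "v < n"
      by simp
  qed
  have "x @ y \<in> multiperms (n - 1) m"
    using wm multiperms_insert_top[OF n m x y] unfolding w_eq by simp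
  moreover have "sorted x" and "avoids_122_213 (x @ y)"
    using av avoids_insert_top_iff[OF below] unfolding w_eq by simp_all
  ultimately have "x @ y \<in> Av (n - 1) m" and "length x \<in> sorted_prefixes (x @ y)"
    unfolding Av_def sorted_prefixes_def by simp_all
  moreover have "w = insert_top n m (x @ y) (length x)"
    unfolding w_eq insert_top_def by simp
  ultimately show ?thesis
    by (rule that)
qed

text \<open>Insertion of a letter not occurring in \<open>u\<close> is injective: the position of its
  last copy recovers both \<open>u\<close> and \<open>k\<close>.\<close>

lemma insert_top_inj:
  "inj_on (\<lambda>(u, k). insert_top n m u k) {(u, k). n \<notin> set u \<and> k \<le> length u}"
proof (rule inj_onI, clarify)
  fix u k u' k'
  assume u: "n \<notin> set u" "k \<le> length u" and u': "k' \<le> length u'"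
    and eq: "insert_top n m u k = insert_top n m u' k'"
  have "take k u @ n # drop k u = take k' u' @ n # drop k' u'"
    using eq unfolding insert_top_def by simp
  moreover have "n \<notin> set (take k u)" and "n \<notin> set (drop k u)"
    using u(1) by (meson in_set_takeD in_set_dropD)+
  ultimately have "take k u = take k' u' \<and> drop k u = drop k' u'"
    using append_Cons_eq_iff by metis
  then have "take k u = take k' u'" and "drop k u = drop k' u'"
    by simp_all
  then have "u = u'"
    by (metis append_take_drop_id)
  moreover from this have "k = k'"
    using \<open>take k u = take k' u'\<close> u u' by (metis length_take min_absorb2)
  ultimately show "u = u' \<and> k = k'" ..
qed

theorem insert_top_bij:
  assumes n: "1 \<le> n" and m: "1 \<le> m"
  shows "bij_betw (\<lambda>(u, k). insert_top n m u k) (SIGMA u:Av (n - 1) m. sorted_prefixes u) (Av n m)"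
  unfolding bij_betw_def
proof
  have "(SIGMA u:Av (n - 1) m. sorted_prefixes u) \<subseteq> {(u, k). n \<notin> set u \<and> k \<le> length u}"
    using Av_letters_below unfolding sorted_prefixes_def by blast
  then show "inj_on (\<lambda>(u, k). insert_top n m u k) (SIGMA u:Av (n - 1) m. sorted_prefixes u)"
    by (rule inj_on_subset[OF insert_top_inj])
  show "(\<lambda>(u, k). insert_top n m u k) ` (SIGMA u:Av (n - 1) m. sorted_prefixes u) = Av n m"
  proof
    show "(\<lambda>(u, k). insert_top n m u k) ` (SIGMA u:Av (n - 1) m. sorted_prefixes u) \<subseteq> Av n m"
      using insert_top_in_Av[OF n m] by auto
    show "Av n m \<subseteq> (\<lambda>(u, k). insert_top n m u k) ` (SIGMA u:Av (n - 1) m. sorted_prefixes u)"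
    proof
      fix w assume "w \<in> Av n m"
      then obtain u k where "u \<in> Av (n - 1) m" "k \<in> sorted_prefixes u" "w = insert_top n m u k"
        using Av_decompose[OF n m] by blast
      then show "w \<in> (\<lambda>(u, k). insert_top n m u k) ` (SIGMA u:Av (n - 1) m. sorted_prefixes u)"
        by force
    qed
  qed
qed

lemma sorted_replicate_append:
  assumes "1 \<le> j" and "\<forall>a\<in>set v. a \<le> p"
  shows "sorted (replicate j p @ v) \<longleftrightarrow> set v \<subseteq> {p}"
proof
  assume "sorted (replicate j p @ v)"
  then show "set v \<subseteq> {p}"
    using assms by (fastforce simp: sorted_append)
next
  assume "set v \<subseteq> {p}"
  then have "v = replicate (length v) p"
    by (metis replicate_length_same singletonD subsetD)
  then have "replicate j p @ v = replicate (j + length v) p"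
    by (metis replicate_add)
  then show "sorted (replicate j p @ v)"
    by simp
qed

lemma take_only_top:
  assumes "p \<notin> set x" and "p \<notin> set y" and "1 \<le> i" and "i \<le> length (x @ p # y)"
  shows "set (take i (x @ p # y)) \<subseteq> {p} \<longleftrightarrow> x = [] \<and> i = 1"
proof (cases x)
  case Nil
  have "set (take (i - 1) y) \<subseteq> {p} \<longleftrightarrow> set (take (i - 1) y) = {}"
    using assms(2) set_take_subset[of "i - 1" y] by (auto simp: subset_singleton_iff)
  also have "\<dots> \<longleftrightarrow> take (i - 1) y = []"
    by simp
  also have "\<dots> \<longleftrightarrow> i = 1"
    using assms(3,4) Nil by auto
  finally show ?thesis
    using Nil assms(3) by (cases i) auto
next
  case (Cons a x')
  then have "a \<in> set (take i (x @ p # y))" and "a \<noteq> p"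
    using assms(1,3) by (cases i; auto)+
  then show ?thesis
    using Cons by auto
qed

text \<open>For \<open>m \<ge> 2\<close> the sorted prefixes of \<open>insert_top p m u k\<close> are those of length \<open>< m\<close>,
  together with length \<open>m\<close> exactly when the word starts with \<open>p^m\<close>, i.e. when \<open>k = 0\<close>.\<close>

lemma sorted_prefixes_insert_top:
  assumes m: "2 \<le> m" and below: "\<forall>v\<in>set u. v < p" and k: "k \<le> length u"
  shows "sorted_prefixes (insert_top p m u k) = {..<m} \<union> (if k = 0 then {m} else {})"
proof -
  let ?x = "take k u" and ?y = "drop k u"
  let ?w = "replicate (m - 1) p @ ?x @ p # ?y"
  have not_top: "p \<notin> set ?x" "p \<notin> set ?y"
    using below by (auto dest: in_set_takeD in_set_dropD)
  have x_empty: "?x = [] \<longleftrightarrow> k = 0"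
    using k by auto
  have "i \<in> sorted_prefixes ?w \<longleftrightarrow> i < m \<or> (i = m \<and> k = 0)" for i
  proof (cases "i < m")
    case True
    then have "take i ?w = replicate i p"
      by simp
    then show ?thesis
      using True unfolding sorted_prefixes_def by simp
  next
    case False
    show ?thesis
    proof (cases "i \<le> length ?w")
      case True
      let ?j = "i - (m - 1)"
      have j: "1 \<le> ?j" "?j \<le> length (?x @ p # ?y)"
        using False True m by auto
      have "take i ?w = replicate (m - 1) p @ take ?j (?x @ p # ?y)"
        using False by simp
      moreover have "\<forall>a\<in>set (take ?j (?x @ p # ?y)). a \<le> p"
        using below by (auto dest!: in_set_takeD in_set_dropD intro: less_imp_le)
      ultimately have "sorted (take i ?w) \<longleftrightarrow> set (take ?j (?x @ p # ?y)) \<subseteq> {p}"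
        using m by (simp add: sorted_replicate_append)
      also have "\<dots> \<longleftrightarrow> ?x = [] \<and> ?j = 1"
        using take_only_top[OF not_top j] .
      finally show ?thesis
        using False True m x_empty unfolding sorted_prefixes_def by auto
    next
      case False
      moreover have "length ?w = m + length u"
        using m k by simp
      ultimately show ?thesis
        using \<open>\<not> i < m\<close> unfolding sorted_prefixes_def by auto
    qed
  qed
  then show ?thesis
    unfolding insert_top_def by (intro set_eqI) (simp add: lessThan_iff)
qed

lemma finite_Av: "finite (Av n m)"
proof (rule finite_subset)
  show "Av n m \<subseteq> {w. set w \<subseteq> {1..n} \<and> length w = n * m}"
    unfolding Av_def multiperms_def by blast
  show "finite {w. set w \<subseteq> {1..n} \<and> length w = n * m}"
    by (rule finite_lists_length_eq) simp
qed

lemma finite_sorted_prefixes: "finite (sorted_prefixes u)"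
  unfolding sorted_prefixes_def by simp

lemma Av_zero: "Av 0 m = {[]}"
  unfolding Av_def multiperms_def avoids_122_213_def by auto

lemma zero_in_sorted_prefixes: "0 \<in> sorted_prefixes u"
  unfolding sorted_prefixes_def by simp

lemma card_Av_sum:
  assumes "1 \<le> n" and "1 \<le> m"
  shows "card (Av n m) = (\<Sum>u\<in>Av (n - 1) m. card (sorted_prefixes u))"
proof -
  have "card (Av n m) = card (SIGMA u:Av (n - 1) m. sorted_prefixes u)"
    using bij_betw_same_card[OF insert_top_bij[OF assms]] by simp
  also have "\<dots> = (\<Sum>u\<in>Av (n - 1) m. card (sorted_prefixes u))"
    by (simp add: finite_Av finite_sorted_prefixes)
  finally show ?thesis .
qed

text \<open>The recurrence: summing \<open>m + [k = 0]\<close> over the pairs describing \<open>Av (n - 1) m\<close>.\<close>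

lemma card_Av_rec:
  assumes n: "2 \<le> n" and m: "2 \<le> m"
  shows "card (Av n m) = m * card (Av (n - 1) m) + card (Av (n - 2) m)"
proof -
  let ?S = "SIGMA v:Av (n - 2) m. sorted_prefixes v"
  let ?ins = "\<lambda>(v, k). insert_top (n - 1) m v k"
  have bij: "bij_betw ?ins ?S (Av (n - 1) m)"
    using insert_top_bij[of "n - 1" m] n m by (simp add: numeral_2_eq_2)
  have card_K: "card (sorted_prefixes (?ins vk)) = m + (if snd vk = 0 then 1 else 0)"
    if mem: "vk \<in> ?S" for vk
  proof -
    obtain v k where vk: "vk = (v, k)" "v \<in> Av (n - 2) m" "k \<in> sorted_prefixes v"
      using mem by (cases vk) auto
    have "\<forall>a\<in>set v. a < n - 1"
      using Av_letters_below[of v "n - 1" m] vk(2) by (simp add: numeral_2_eq_2)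
    moreover have "k \<le> length v"
      using vk(3) unfolding sorted_prefixes_def by simp
    ultimately show ?thesis
      using sorted_prefixes_insert_top[OF m] vk(1) by simp
  qed
  have "card (Av n m) = (\<Sum>u\<in>Av (n - 1) m. card (sorted_prefixes u))"
    using card_Av_sum n m by simp
  also have "\<dots> = (\<Sum>vk\<in>?S. card (sorted_prefixes (?ins vk)))"
    by (rule sum.reindex_bij_betw[OF bij, symmetric])
  also have "\<dots> = (\<Sum>vk\<in>?S. m + (if snd vk = 0 then 1 else 0))"
    using card_K by (rule sum.cong[OF refl])
  also have "\<dots> = m * card ?S + card {vk \<in> ?S. snd vk = 0}"
    by (simp add: sum.distrib sum.If_cases finite_Av finite_sorted_prefixes Int_def)
  also have "card ?S = card (Av (n - 1) m)"
    by (rule bij_betw_same_card[OF bij])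
  also have "{vk \<in> ?S. snd vk = 0} = Av (n - 2) m \<times> {0}"
    using zero_in_sorted_prefixes by auto
  also have "card \<dots> = card (Av (n - 2) m)"
    by (simp add: card_cartesian_product)
  finally show ?thesis .
qed

lemma s_count_eq_card_Av: "s_count n m {[1,2,2],[2,1,3]} = card (Av n m)"
  unfolding s_count_def Av_def avoids_all_iff ..

theorem theorem6:
  fixes m :: nat
  assumes "m \<ge> 2"
  shows "s_count 1 m {[1,2,2],[2,1,3]} = 1
       \<and> s_count 2 m {[1,2,2],[2,1,3]} = m + 1
       \<and> (\<forall>n\<ge>3. s_count n m {[1,2,2],[2,1,3]} =
              m * s_count (n - 1) m {[1,2,2],[2,1,3]} + s_count (n - 2) m {[1,2,2],[2,1,3]})"
proof -
  have one: "card (Av 1 m) = 1"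
    using card_Av_sum[of 1 m] assms by (simp add: Av_zero sorted_prefixes_def)
  have two: "card (Av 2 m) = m + 1"
    using card_Av_rec[of 2 m] assms one by (simp add: Av_zero)
  have "card (Av n m) = m * card (Av (n - 1) m) + card (Av (n - 2) m)" if "n \<ge> 3" for n
    using card_Av_rec that assms by simp
  then show ?thesis
    unfolding s_count_eq_card_Av using one two by simp
qed

end
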